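(* Let $F$ be any field, $N\in\mathbb{N}$, and $p,p'\in\mathbb{N}$ with $p+p'\le N+1$. If $x\in F^{N+1}$ satisfies $\operatorname{rank}(H_{p,p'-1}(x))\le p$ and $\operatorname{rank}(H_{p-1,p'}(x))\le p'$, then $\operatorname{rank}(H_{p,p'-1}(x))=\operatorname{rank}(H_{p-1,p'}(x))$.
   Context: $\mathbb{N}=\{0,1,2,\ldots\}$. For $N\in\mathbb{N}$, $x=(x_0,\ldots,x_N)\in F^{N+1}$ and integers $s,t\ge -1$ with $s+t\le N$, the Hankel matrix $H_{s,t}(x)$ is the $(s+1)\times(t+1)$ matrix $(x_{i+j})_{0\le i\le s,\,0\le j\le t}$ (a matrix with zero rows or columns has rank $0$). *)

theory Defs
  imports "Jordan_Normal_Form.DL_Rank"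
begin

text \<open>The paper's H_{s,t}(x) is hankel_mat x (s+1) (t+1) (so s = -1 or t = -1 gives
  a matrix with zero rows/columns).\<close>
definition hankel_mat :: "'a vec \<Rightarrow> nat \<Rightarrow> nat \<Rightarrow> 'a mat" where
  "hankel_mat x r c = mat r c (\<lambda>(i, j). x $ (i + j))"

definition mrank :: "'a::field mat \<Rightarrow> nat" where
  "mrank A = vec_space.rank (dim_row A) A"

end

theory Submission
  imports Defs
begin

text \<open>Write \<open>H(a, b)\<close> for the \<open>a \<times> b\<close> Hankel matrix and \<open>r\<close> for the rank of \<open>H(p, p')\<close>.
  Appending a column raises the rank by at most one, and since the transpose of a Hankel matrix
  is again Hankel, so does appending a row. The heart of the argument: if appending row \<open>p\<close>
  does not raise the rank, then \<open>x\<^sub>p\<^sub>+\<^sub>j\<close> is a fixed combination of \<open>x\<^sub>j, \<dots>, x\<^sub>p\<^sub>-\<^sub>1\<^sub>+\<^sub>j\<close>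
  for \<open>j < p'\<close>; if moreover the columns of \<open>H(p, p')\<close> are dependent, the first column
  depending on its predecessors gives a recurrence on rows \<open>< p\<close>, which the row relation
  propagates far enough down that, shifted, it expresses column \<open>p'\<close> through the last old
  columns. So appending the column does not raise the rank either. The bounds \<open>\<le> p\<close> and
  \<open>\<le> p'\<close> supply the dependence whenever an extended rank is \<open>r + 1\<close>; with the transposed
  statement, both extended ranks are therefore \<open>r\<close> or both are \<open>r + 1\<close>.\<close>

context vec_space
begin

lemma rank_le_if_cols_in_span:
  assumes A: "A \<in> carrier_mat n a" and B: "B \<in> carrier_mat n b"
    and cols: "set (cols A) \<subseteq> span (set (cols B))"
  shows "rank A \<le> rank B"
proof -
  have cols_A: "set (cols A) \<subseteq> carrier_vec n" and cols_B: "set (cols B) \<subseteq> carrier_vec n"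
    using A B cols_dim by blast+
  have sub_B: "subspace class_ring (span (set (cols B))) V"
    and sub_A: "subspace class_ring (span (set (cols A))) V"
    using span_is_subspace cols_A cols_B by auto
  have "subspace class_ring (span (set (cols A))) (vs (span (set (cols B))))"
    using nested_subspaces[OF sub_B sub_A span_subsetI[OF cols_B cols]] .
  then show ?thesis
    unfolding rank_def
    using vectorspace.subspace_dim[OF subspace_is_vs[OF sub_B]] fin_dim_span_cols[OF A]
      fin_dim_span_cols[OF B] by auto
qed

lemma rank_mult_le:
  assumes A: "A \<in> carrier_mat n m" and B: "B \<in> carrier_mat m k"
  shows "rank (A * B) \<le> rank A"
proof (rule rank_le_if_cols_in_span[OF mult_carrier_mat[OF A B] A], rule subsetI)
  fix c assume "c \<in> set (cols (A * B))"
  then obtain j where j: "j < k" "c = col (A * B) j"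
    using A B unfolding cols_def by (auto simp del: col_mult2)
  then have "c = A *\<^sub>v col B j" using col_mult2[OF A B j(1)] by simp
  moreover have "col B j \<in> carrier_vec m" using B col_dim[of B j] by simp
  ultimately show "c \<in> span (set (cols A))"
    using col_space_eq[OF A] A unfolding col_space_def by auto
qed

lemma exists_maximal_indpt_cols:
  obtains U where "maximal U (\<lambda>T. T \<subseteq> set (cols A) \<and> lin_indpt T)" "finite U"
  using maximal_exists_superset[of "set (cols A)" "\<lambda>T. T \<subseteq> set (cols A) \<and> lin_indpt T" "{}"]
    finite_lin_indpt2[of "{}"] by auto

lemma rank_insert_col:
  assumes A: "A \<in> carrier_mat n a" and A': "A' \<in> carrier_mat n a'"
    and cols: "set (cols A') = insert d (set (cols A))"
  shows "rank A' = (if d \<in> span (set (cols A)) then rank A else Suc (rank A))"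
proof -
  have cols_A: "set (cols A) \<subseteq> carrier_vec n" and cols_A': "set (cols A') \<subseteq> carrier_vec n"
    using A A' cols_dim by blast+
  have le: "rank A \<le> rank A'"
    using rank_le_if_cols_in_span[OF A A'] in_own_span[OF cols_A'] cols by auto
  have le_Suc: "rank A' \<le> Suc (rank A)"
  proof -
    obtain U where U: "maximal U (\<lambda>T. T \<subseteq> set (cols A') \<and> lin_indpt T)" "finite U"
      using exists_maximal_indpt_cols by blast
    then have "U - {d} \<subseteq> set (cols A)" "lin_indpt (U - {d})"
      using cols subset_li_is_li[of U "U - {d}"] unfolding maximal_def by auto
    then have "card (U - {d}) \<le> rank A" using rank_ge_card_indpt[OF A] by blast
    moreover have "card U \<le> Suc (card (U - {d}))"
      using U(2) by (cases "d \<in> U") (auto simp: card_Suc_Diff1)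
    ultimately show ?thesis using rank_card_indpt[OF A' U(1)] by simp
  qed
  show ?thesis
  proof (cases "d \<in> span (set (cols A))")
    case True
    then have "rank A' \<le> rank A"
      using rank_le_if_cols_in_span[OF A' A] in_own_span[OF cols_A] cols by auto
    with le True show ?thesis by simp
  next
    case False
    obtain U where U: "maximal U (\<lambda>T. T \<subseteq> set (cols A) \<and> lin_indpt T)" "finite U"
      using exists_maximal_indpt_cols by blast
    have U_sub: "U \<subseteq> set (cols A)" and U_indpt: "lin_indpt U"
      using U(1) unfolding maximal_def by auto
    have U_carrier: "U \<subseteq> carrier_vec n" using U_sub cols_A by blast
    have "d \<notin> span U" using False span_is_monotone[OF U_sub] by blast
    then have d_notin: "d \<notin> U" using in_own_span[OF U_carrier] by blast
    have "lin_indpt (U \<union> {d})"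
      using lin_dep_iff_in_span[OF U_carrier U_indpt _ d_notin] \<open>d \<notin> span U\<close> cols cols_A' by auto
    moreover have "U \<union> {d} \<subseteq> set (cols A')" using U_sub cols by auto
    ultimately have "card (U \<union> {d}) \<le> rank A'"
      using rank_ge_card_indpt[OF A'] by blast
    then have "Suc (rank A) \<le> rank A'"
      using rank_card_indpt[OF A U(1)] U(2) d_notin by simp
    with le_Suc False show ?thesis by simp
  qed
qed

lemma cols_in_span_maximal_indpt:
  assumes A: "A \<in> carrier_mat n a"
    and U: "maximal U (\<lambda>T. T \<subseteq> set (cols A) \<and> lin_indpt T)"
  shows "set (cols A) \<subseteq> span U"
proof
  fix c assume c: "c \<in> set (cols A)"
  have U_sub: "U \<subseteq> set (cols A)" and U_indpt: "lin_indpt U"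
    using U unfolding maximal_def by auto
  have c_carrier: "c \<in> carrier_vec n" and U_carrier: "U \<subseteq> carrier_vec n"
    using A c U_sub cols_dim by blast+
  show "c \<in> span U"
  proof (rule ccontr)
    assume c_notin: "c \<notin> span U"
    then have "c \<notin> U" using in_own_span[OF U_carrier] by blast
    then have "lin_indpt (U \<union> {c})"
      using lin_dep_iff_in_span[OF U_carrier U_indpt c_carrier] c_notin by blast
    then have "U \<union> {c} = U" using U U_sub c unfolding maximal_def by blast
    then show False using \<open>c \<notin> U\<close> by blast
  qed
qed

lemma exists_mult_if_cols_in_span:
  assumes A: "A \<in> carrier_mat n a" and B: "B \<in> carrier_mat n b"
    and cols: "set (cols A) \<subseteq> span (set (cols B))"
  obtains C where "C \<in> carrier_mat b a" "A = B * C"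
proof -
  have "\<forall>j<a. \<exists>u\<in>carrier_vec b. B *\<^sub>v u = col A j"
  proof (intro allI impI)
    fix j assume "j < a"
    then have "col A j \<in> set (cols A)" using A by (metis carrier_matD(2) cols_length cols_nth nth_mem)
    then have "col A j \<in> {y \<in> carrier_vec n. \<exists>u\<in>carrier_vec b. B *\<^sub>v u = y}"
      using cols col_space_eq[OF B] B unfolding col_space_def by auto
    then show "\<exists>u\<in>carrier_vec b. B *\<^sub>v u = col A j" by simp
  qed
  then obtain u where u: "\<And>j. j < a \<Longrightarrow> u j \<in> carrier_vec b \<and> B *\<^sub>v u j = col A j"
    by metis
  define C where "C = mat b a (\<lambda>(i, j). u j $ i)"
  have C: "C \<in> carrier_mat b a" unfolding C_def by simp
  have "col (B * C) j = col A j" if "j < a" for j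
  proof -
    have "col C j = u j" using u[OF that] that unfolding C_def by (auto intro!: eq_vecI)
    then show ?thesis using col_mult2[OF B C that] u[OF that] by simp
  qed
  then have "A = B * C"
    using A B C by (intro mat_col_eqI) auto
  with C show ?thesis by (rule that)
qed

end

lemma rank_transpose_le:
  fixes A :: "'a::field mat"
  assumes A: "A \<in> carrier_mat n m"
  shows "vec_space.rank m A\<^sup>T \<le> vec_space.rank n A"
proof -
  interpret vn: vec_space "TYPE('a)" n .
  interpret vm: vec_space "TYPE('a)" m .
  obtain U where U: "maximal U (\<lambda>T. T \<subseteq> set (cols A) \<and> vn.lin_indpt T)" "finite U"
    using vn.exists_maximal_indpt_cols by blast
  obtain us where us: "distinct us" "set us = U" using finite_distinct_list[OF U(2)] by blast
  have "U \<subseteq> set (cols A)" using U(1) unfolding maximal_def by blast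
  then have U_carrier: "U \<subseteq> carrier_vec n" using cols_dim[of A] A by blast
  define B where "B = mat_of_cols n us"
  have B: "B \<in> carrier_mat n (card U)"
    unfolding B_def using distinct_card[OF us(1)] us(2) by (metis mat_of_cols_carrier(1))
  have "set (cols B) = U" unfolding B_def using U_carrier us(2) by simp
  then have "set (cols A) \<subseteq> vn.span (set (cols B))"
    using vn.cols_in_span_maximal_indpt[OF A U(1)] by simp
  then obtain C where C: "C \<in> carrier_mat (card U) m" "A = B * C"
    using vn.exists_mult_if_cols_in_span[OF A B] by blast
  have "A\<^sup>T = C\<^sup>T * B\<^sup>T" using C transpose_mult[OF B C(1)] by simp
  then have "vm.rank A\<^sup>T \<le> vm.rank C\<^sup>T"
    using vm.rank_mult_le[of "C\<^sup>T" "card U" "B\<^sup>T" n] B C(1) by simp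
  also have "\<dots> \<le> card U" using vm.rank_le_nc[of "C\<^sup>T"] C(1) by simp
  also have "\<dots> = vn.rank A" using vn.rank_card_indpt[OF A U(1)] by simp
  finally show ?thesis .
qed

lemma mrank_transpose: "mrank A\<^sup>T = mrank A"
proof -
  have "A \<in> carrier_mat (dim_row A) (dim_col A)" "A\<^sup>T \<in> carrier_mat (dim_col A) (dim_row A)"
    by auto
  from rank_transpose_le[OF this(1)] rank_transpose_le[OF this(2)]
  show ?thesis unfolding mrank_def by simp
qed

lemma relation_extends_by_recurrence:
  fixes f u w :: "nat \<Rightarrow> 'a::comm_semiring_0"
  assumes rel: "\<And>i. i < p \<Longrightarrow> f (i + k) = (\<Sum>j<k. w j * f (i + j))"
    and rec: "\<And>j. j < q \<Longrightarrow> f (p + j) = (\<Sum>l<p. u l * f (l + j))"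
    and i: "i < p + (q - k)"
  shows "f (i + k) = (\<Sum>j<k. w j * f (i + j))"
  using i
proof (induction i rule: less_induct)
  case (less i)
  show ?case
  proof (cases "i < p")
    case True
    then show ?thesis by (rule rel)
  next
    case False
    then obtain t where i_eq: "i = p + t" and t: "t + k < q"
      using less.prems by (metis add_diff_inverse_nat less_diff_conv nat_add_left_cancel_less)
    have "f (i + k) = (\<Sum>l<p. u l * f (l + t + k))"
      using rec[of "t + k"] t by (simp add: i_eq add.assoc)
    also have "\<dots> = (\<Sum>l<p. u l * (\<Sum>j<k. w j * f (l + t + j)))"
      using less.IH[of "_ + t"] less.prems by (intro sum.cong refl) (simp add: i_eq)
    also have "\<dots> = (\<Sum>j<k. w j * (\<Sum>l<p. u l * f (l + (t + j))))"
      by (simp add: sum_distrib_left mult.left_commute add.assoc sum.swap[of _ "{..<k}"])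
    also have "\<dots> = (\<Sum>j<k. w j * f (i + j))"
      using rec t by (intro sum.cong refl) (simp add: i_eq add.assoc)
    finally show ?thesis .
  qed
qed

lemma hankel_carrier [simp]:
  "hankel_mat x a b \<in> carrier_mat a b"
  "dim_row (hankel_mat x a b) = a"
  "dim_col (hankel_mat x a b) = b"
  unfolding hankel_mat_def by auto

lemma hankel_transpose: "(hankel_mat x a b)\<^sup>T = hankel_mat x b a"
  by (rule eq_matI) (auto simp: hankel_mat_def add.commute)

lemma mrank_hankel_swap: "mrank (hankel_mat x b a) = mrank (hankel_mat x a b)"
  using mrank_transpose[of "hankel_mat x a b"] by (simp add: hankel_transpose)

lemma set_cols_hankel_Suc:
  "set (cols (hankel_mat x a (Suc b))) = insert (vec a (\<lambda>i. x $ (i + b))) (set (cols (hankel_mat x a b)))"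
  by (auto simp: cols_def hankel_mat_def intro!: eq_vecI)

lemma hankel_mult_vec_eq_iff:
  fixes x :: "'a::comm_semiring_0 vec"
  assumes "w \<in> carrier_vec b"
  shows "hankel_mat x a b *\<^sub>v w = vec a (\<lambda>i. x $ (i + c))
    \<longleftrightarrow> (\<forall>i<a. x $ (i + c) = (\<Sum>j<b. w $ j * x $ (i + j)))"
proof -
  have "(hankel_mat x a b *\<^sub>v w) $ i = (\<Sum>j<b. w $ j * x $ (i + j))" if "i < a" for i
    using assms that
    by (simp add: hankel_mat_def scalar_prod_def atLeast0LessThan) (simp add: mult.commute)
  then show ?thesis by (auto simp: vec_eq_iff)
qed

lemma mrank_hankel_Suc_col:
  fixes x :: "'a::field vec"
  shows "mrank (hankel_mat x a (Suc b)) =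
    (if \<exists>w\<in>carrier_vec b. \<forall>i<a. x $ (i + b) = (\<Sum>j<b. w $ j * x $ (i + j))
     then mrank (hankel_mat x a b) else Suc (mrank (hankel_mat x a b)))"
proof -
  interpret vec_space "TYPE('a)" a .
  have "vec a (\<lambda>i. x $ (i + b)) \<in> span (set (cols (hankel_mat x a b)))
    \<longleftrightarrow> (\<exists>w\<in>carrier_vec b. hankel_mat x a b *\<^sub>v w = vec a (\<lambda>i. x $ (i + b)))"
    using col_space_eq[OF hankel_carrier(1)] unfolding col_space_def by auto
  also have "\<dots> \<longleftrightarrow> (\<exists>w\<in>carrier_vec b. \<forall>i<a. x $ (i + b) = (\<Sum>j<b. w $ j * x $ (i + j)))"
    using hankel_mult_vec_eq_iff by blast
  finally show ?thesis
    using rank_insert_col[OF hankel_carrier(1) hankel_carrier(1) set_cols_hankel_Suc]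
    unfolding mrank_def hankel_carrier(2) by simp
qed

lemma hankel_col_dependent_on_preceding:
  fixes x :: "'a::field vec"
  assumes "mrank (hankel_mat x a b) < b"
  obtains k w where "k < b" "\<forall>i<a. x $ (i + k) = (\<Sum>j<k. w j * x $ (i + j))"
proof -
  have False if none: "\<forall>k<b. \<forall>w. \<not> (\<forall>i<a. x $ (i + k) = (\<Sum>j<k. w j * x $ (i + j)))"
  proof -
    have "mrank (hankel_mat x a k) = k" if "k \<le> b" for k
      using that
    proof (induction k)
      case 0
      have "vec_space.rank a (hankel_mat x a 0) \<le> 0" by (rule vec_space.rank_le_nc) simp
      then show ?case unfolding mrank_def by simp
    next
      case (Suc k)
      have "\<not> (\<exists>w\<in>carrier_vec k. \<forall>i<a. x $ (i + k) = (\<Sum>j<k. w $ j * x $ (i + j)))"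
        using none Suc.prems by auto
      then show ?case using Suc mrank_hankel_Suc_col[of x a k] by simp
    qed
    then show False using assms by simp
  qed
  then show ?thesis using that by blast
qed

lemma mrank_hankel_col_stable_if_row_stable:
  fixes x :: "'a::field vec"
  assumes row: "mrank (hankel_mat x (Suc p) q) = mrank (hankel_mat x p q)"
    and col_le: "mrank (hankel_mat x p (Suc q)) \<le> q"
  shows "mrank (hankel_mat x p (Suc q)) = mrank (hankel_mat x p q)"
proof (cases "mrank (hankel_mat x p q) < q")
  case False
  then show ?thesis using col_le mrank_hankel_Suc_col[of x p q] by (simp split: if_splits)
next
  case True
  then obtain k w where k: "k < q" and w: "\<forall>i<p. x $ (i + k) = (\<Sum>j<k. w j * x $ (i + j))"
    by (rule hankel_col_dependent_on_preceding)
  have "mrank (hankel_mat x q (Suc p)) = mrank (hankel_mat x q p)"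
    using row by (simp add: mrank_hankel_swap)
  then obtain u where u: "\<forall>j<q. x $ (j + p) = (\<Sum>l<p. u $ l * x $ (j + l))"
    using mrank_hankel_Suc_col[of x q p] by (auto split: if_splits)
  have rec: "x $ (p + j) = (\<Sum>l<p. u $ l * x $ (l + j))" if "j < q" for j
    using u that by (metis (no_types, lifting) add.commute sum.cong)
  have extended: "x $ (i + (q - k) + k) = (\<Sum>j<k. w j * x $ (i + (q - k) + j))" if "i < p" for i
    using relation_extends_by_recurrence[of p "($) x" k w q "($) u" "i + (q - k)"] w rec that
    by simp
  \<comment> \<open>the recurrence shifted by \<open>q - k\<close> writes column \<open>q\<close> through columns \<open>q - k, \<dots>, q - 1\<close>\<close>
  define v where "v = vec q (\<lambda>l. if q - k \<le> l then w (l - (q - k)) else 0)"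
  have "x $ (i + q) = (\<Sum>l<q. v $ l * x $ (i + l))" if "i < p" for i
  proof -
    have "(\<Sum>l<q. v $ l * x $ (i + l)) = (\<Sum>l\<in>{q - k..<q}. w (l - (q - k)) * x $ (i + l))"
      by (rule sum.mono_neutral_cong_right) (auto simp: v_def)
    also have "\<dots> = (\<Sum>j<k. w j * x $ (i + (q - k) + j))"
      using k by (simp add: sum.atLeastLessThan_shift_0 atLeast0LessThan add.assoc)
    also have "\<dots> = x $ (i + q)" using extended[OF that] k by simp
    finally show ?thesis by simp
  qed
  moreover have "v \<in> carrier_vec q" unfolding v_def by simp
  ultimately show ?thesis using mrank_hankel_Suc_col[of x p q] by auto
qed

theorem lemma8:
  fixes x :: "'a::field vec" and N p p' :: nat
  assumes "x \<in> carrier_vec (N + 1)"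
    and "p + p' \<le> N + 1"
    and "mrank (hankel_mat x (p + 1) p') \<le> p"
    and "mrank (hankel_mat x p (p' + 1)) \<le> p'"
  shows "mrank (hankel_mat x (p + 1) p') = mrank (hankel_mat x p (p' + 1))"
proof -
  define r where "r = mrank (hankel_mat x p p')"
  have col: "r \<le> mrank (hankel_mat x p (Suc p'))" "mrank (hankel_mat x p (Suc p')) \<le> Suc r"
    using mrank_hankel_Suc_col[of x p p'] unfolding r_def by (auto split: if_splits)
  have row: "r \<le> mrank (hankel_mat x (Suc p) p')" "mrank (hankel_mat x (Suc p) p') \<le> Suc r"
    using mrank_hankel_Suc_col[of x p' p] unfolding r_def
    by (auto simp: mrank_hankel_swap split: if_splits)
  have "mrank (hankel_mat x p (Suc p')) = r" if "mrank (hankel_mat x (Suc p) p') = r"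
    using mrank_hankel_col_stable_if_row_stable[of x p p'] that assms(4) unfolding r_def by simp
  moreover have "mrank (hankel_mat x (Suc p) p') = r" if "mrank (hankel_mat x p (Suc p')) = r"
    using mrank_hankel_col_stable_if_row_stable[of x p' p] that assms(3)
    unfolding r_def by (simp add: mrank_hankel_swap)
  ultimately show ?thesis using col row by simp linarith
qed

end
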